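(* Let $\mathcal K\subset S^D_+$ be compact and $\mathcal P^\uparrow(\mathcal K)=\mathcal P^\uparrow(S^D_+)\cap\mathcal P(\mathcal K)$. Then $\mathcal P^\uparrow(\mathcal K)$ is a closed subset of $(\mathcal P(\mathcal K),d)$, in particular it is compact for the topology induced by $d$. Moreover, for every $\mu\in\mathcal P(\mathcal K)$, the support of $\mu$ is totally ordered if and only if $\mu\in\mathcal P^\uparrow(\mathcal K)$.
   Context: $S^D_+$: positive semidefinite symmetric $D\times D$ matrices with Frobenius norm $|\cdot|$; for $x,x'\in S^D$, $x\le x'$ means $x'-x\in S^D_+$; a set $S\subset S^D_+$ is totally ordered if for all $x,x'\in S$, $x\le x'$ or $x'\le x$. $\mathcal P(\mathcal K)$: Borel probability measures on $\mathcal K$ with $1$-Wasserstein distance $d(\mu,\nu)=\inf_\pi\int|x-y|\,\mathrm d\pi(x,y)$. A probability measure on $S^D_+$ is monotone if it is the law of $\mathsf q(U)$ with $U$ uniform on $[0,1)$ and $\mathsf q:[0,1)\to S^D_+$ nondecreasing ($\mathsf q(v)-\mathsf q(u)\in S^D_+$ for $u\le v$); $\mathcal P^\uparrow(S^D_+)$ is the set of monotone probability measures. *)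

theory Defs
  imports "HOL-Probability.Probability"
begin

text \<open>Symmetric D x D real matrices are elements of type real^'n^'n (D = CARD('n)).
  The norm on this type is the Frobenius norm, so dist x y = |x - y|.\<close>

definition psd :: "real^'n^'n \<Rightarrow> bool" where
  "psd A \<longleftrightarrow> transpose A = A \<and> (\<forall>v. 0 \<le> v \<bullet> (A *v v))"

definition psd_set :: "(real^'n^'n) set" where
  "psd_set = {A. psd A}"

definition loewner_le :: "real^'n^'n \<Rightarrow> real^'n^'n \<Rightarrow> bool" where
  "loewner_le x x' \<longleftrightarrow> psd (x' - x)"

definition totally_ordered :: "(real^'n^'n) set \<Rightarrow> bool" where
  "totally_ordered S \<longleftrightarrow> (\<forall>x\<in>S. \<forall>x'\<in>S. loewner_le x x' \<or> loewner_le x' x)"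

text \<open>Borel probability measures on K (represented as Borel probability measures on the
  ambient matrix space concentrated on K).\<close>
definition prob_on :: "(real^'n^'n) set \<Rightarrow> (real^'n^'n) measure set" where
  "prob_on K = {\<mu>. prob_space \<mu> \<and> sets \<mu> = sets borel \<and> emeasure \<mu> K = 1}"

definition couplings :: "'a::topological_space measure \<Rightarrow> 'a measure \<Rightarrow> ('a \<times> 'a) measure set" where
  "couplings \<mu> \<nu> = {\<pi>. prob_space \<pi> \<and> sets \<pi> = sets (borel \<Otimes>\<^sub>M borel)
      \<and> distr \<pi> borel fst = \<mu> \<and> distr \<pi> borel snd = \<nu>}"

definition wasserstein1 :: "'a::metric_space measure \<Rightarrow> 'a measure \<Rightarrow> real" where
  "wasserstein1 \<mu> \<nu> = Inf ((\<lambda>\<pi>. integral\<^sup>L \<pi> (\<lambda>(x,y). dist x y)) ` couplings \<mu> \<nu>)"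

definition unif01 :: "real measure" where
  "unif01 = uniform_measure lborel {0..<1}"

definition monotone_measures :: "(real^'n^'n) measure set" where
  "monotone_measures = {\<mu>. \<exists>q :: real \<Rightarrow> real^'n^'n.
      q \<in> borel_measurable lborel \<and>
      (\<forall>u\<in>{0..<1}. q u \<in> psd_set) \<and>
      (\<forall>u\<in>{0..<1}. \<forall>v\<in>{0..<1}. u \<le> v \<longrightarrow> loewner_le (q u) (q v)) \<and>
      \<mu> = distr unif01 borel q}"

definition mono_prob_on :: "(real^'n^'n) set \<Rightarrow> (real^'n^'n) measure set" where
  "mono_prob_on K = monotone_measures \<inter> prob_on K"

definition msupport :: "'a::metric_space measure \<Rightarrow> 'a set" where
  "msupport \<mu> = {x. \<forall>e>0. 0 < emeasure \<mu> (ball x e)}"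

end

theory Submission
  imports Defs "HOL-Library.Diagonal_Subsequence"
begin

text \<open>The law of a monotone path has totally ordered support, since any two values of the path
  are comparable and comparability is a closed relation. Conversely, the trace is injective and
  monotone on a totally ordered support, so the measure is the law of the inverse of the trace
  applied to the quantile function of the trace distribution.

  By Markov's inequality for the transport cost, every support point of a \<open>W\<^sub>1\<close>-limit is
  approximated by support points of the approximants; hence the limit again has totally ordered
  support. For compactness, the monotone paths are uniformly bounded in trace, so a Helly-type
  selection gives a pointwise convergent subsequence. Its limit is a monotone path, and coupling
  the paths through the same uniform variable, dominated convergence gives convergence in
  \<open>W\<^sub>1\<close>.\<close>

section \<open>Trace and Loewner order\<close>

lemma inner_axis_mult_axis: "axis i (c::real) \<bullet> (A *v axis j d) = c * d * A$i$j"
proof -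
  have "x * axis j d $ k = (if k = j then x * d else 0)" for x :: real and k
    by (simp add: axis_def)
  then show ?thesis by (simp add: inner_axis' matrix_vector_mult_def sum.delta)
qed

lemma psd_diag_nonneg: "psd A \<Longrightarrow> 0 \<le> A$i$i"
  unfolding psd_def by (metis inner_axis_mult_axis mult_1)

lemma psd_symmetric: "psd A \<Longrightarrow> A$i$j = A$j$i"
  unfolding psd_def transpose_def by (metis vec_lambda_beta)

lemma quadratic_form_axis_pair:
  fixes A :: "real^'n^'n"
  shows "(axis i 1 + axis j c) \<bullet> (A *v (axis i 1 + axis j c)) = A$i$i + c * A$i$j + c * A$j$i + c*c*A$j$j"
  by (simp add: matrix_vector_right_distrib inner_add_left inner_add_right inner_axis_mult_axis)

lemma psd_abs_entry_le:
  assumes "psd A" shows "\<bar>A$i$j\<bar> \<le> (A$i$i + A$j$j)/2"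
proof -
  have sym: "A$j$i = A$i$j" using psd_symmetric[OF assms] by simp
  have "0 \<le> A$i$i + c * A$i$j + c * A$j$i + c*c*A$j$j" for c
    using assms quadratic_form_axis_pair[of i j c A] unfolding psd_def by metis
  from this[of 1] this[of "-1"] show ?thesis by (simp add: sym abs_le_iff)
qed

lemma psd_trace_nonneg: "psd A \<Longrightarrow> 0 \<le> trace A"
  unfolding trace_def by (simp add: psd_diag_nonneg sum_nonneg)

lemma psd_norm_le_trace:
  fixes A :: "real^'n^'n"
  assumes "psd A" shows "norm A \<le> CARD('n) * trace A"
proof -
  have "norm A \<le> (\<Sum>i\<in>UNIV. norm (A$i))" unfolding norm_vec_def by (rule L2_set_le_sum) simp
  also have "\<dots> \<le> (\<Sum>i\<in>UNIV. \<Sum>j\<in>UNIV. \<bar>A$i$j\<bar>)" by (intro sum_mono norm_le_l1_cart)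
  also have "\<dots> \<le> (\<Sum>i\<in>UNIV. \<Sum>j\<in>UNIV. (A$i$i + A$j$j)/2)"
    by (intro sum_mono psd_abs_entry_le assms)
  also have "\<dots> = CARD('n) * trace A"
    by (simp add: trace_def sum.distrib sum_divide_distrib[symmetric] sum_distrib_left[symmetric]
         sum.swap[of "\<lambda>i j. A$j$j"] algebra_simps)
  finally show ?thesis .
qed

lemma psd_norm_le_of_trace_le:
  fixes A :: "real^'n^'n" and M :: real
  assumes "psd A" "trace A \<le> M"
  shows "norm A \<le> CARD('n) * M"
proof -
  have "norm A \<le> CARD('n) * trace A" by (rule psd_norm_le_trace[OF assms(1)])
  also have "\<dots> \<le> CARD('n) * M" by (intro mult_left_mono assms(2)) simp
  finally show ?thesis .
qed

lemma psd_0: "psd 0"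
  by (simp add: psd_def transpose_def vec_eq_iff)

lemma loewner_le_refl: "loewner_le x x"
  by (simp add: loewner_le_def psd_0)

lemma loewner_le_trace_le: "loewner_le x y \<Longrightarrow> trace x \<le> trace y"
  unfolding loewner_le_def using psd_trace_nonneg[of "y - x"] by (simp add: trace_sub)

lemma loewner_le_trace_eq_imp_eq:
  fixes x y :: "real^'n^'n"
  assumes "loewner_le x y" and "trace x = trace y" shows "x = y"
  using assms psd_norm_le_trace[of "y - x"] unfolding loewner_le_def by (simp add: trace_sub)

lemma loewner_le_dist_le_trace:
  fixes x y :: "real^'n^'n"
  shows "loewner_le x y \<Longrightarrow> dist x y \<le> CARD('n) * (trace y - trace x)"
  unfolding loewner_le_def dist_norm using psd_norm_le_trace[of "y - x"]
  by (simp add: trace_sub norm_minus_commute)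

lemma continuous_on_trace: "continuous_on S (trace :: real^'n^'n \<Rightarrow> real)"
  unfolding trace_def by (intro continuous_intros)

lemma tendsto_trace: "(f \<longlongrightarrow> l) F \<Longrightarrow> ((\<lambda>x. trace (f x :: real^'n^'n)) \<longlongrightarrow> trace l) F"
  unfolding trace_def by (intro tendsto_intros)

lemma borel_measurable_trace[measurable]: "(trace :: real^'n^'n \<Rightarrow> real) \<in> borel_measurable borel"
  by (intro borel_measurable_continuous_onI continuous_on_trace)

lemma continuous_on_quadratic_form: "continuous_on S (\<lambda>A::real^'n^'n. v \<bullet> (A *v v))"
  unfolding matrix_vector_mult_def inner_vec_def by (intro continuous_intros)

lemma closed_psd_set: "closed (psd_set :: (real^'n^'n) set)"
proof -
  have "psd_set = (\<Inter>i. \<Inter>j. {A::real^'n^'n. A$i$j = A$j$i}) \<inter> (\<Inter>v. {A. 0 \<le> v \<bullet> (A *v v)})"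
    unfolding psd_set_def psd_def transpose_def by (auto simp: vec_eq_iff)
  also have "closed \<dots>"
    by (intro closed_Int closed_INT ballI closed_Collect_eq closed_Collect_le
        continuous_on_quadratic_form continuous_intros)
  finally show ?thesis .
qed

lemma closed_loewner_le: "closed {(x::real^'n^'n, y). loewner_le x y}"
proof -
  have "{(x::real^'n^'n, y). loewner_le x y} = (\<lambda>p. snd p - fst p) -` psd_set"
    by (auto simp: loewner_le_def psd_set_def)
  also have "closed \<dots>"
    by (intro continuous_closed_vimage closed_psd_set continuous_intros)
  finally show ?thesis .
qed

lemma closed_loewner_comparable:
  "closed {(x::real^'n^'n, y). loewner_le x y \<or> loewner_le y x}"
proof -
  have "{(x::real^'n^'n, y). loewner_le x y \<or> loewner_le y x}
      = {(x, y). loewner_le x y} \<union> prod.swap -` {(x, y). loewner_le x y}"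
    by auto
  also have "closed \<dots>"
    by (intro closed_Un closed_loewner_le continuous_closed_vimage isCont_swap)
  finally show ?thesis .
qed

lemma loewner_comparable_approx:
  fixes x y :: "real^'n^'n"
  assumes "\<And>e. e > 0 \<Longrightarrow> \<exists>a b. dist a x < e \<and> dist b y < e \<and> (loewner_le a b \<or> loewner_le b a)"
  shows "loewner_le x y \<or> loewner_le y x"
proof -
  have "(x, y) \<in> {(x, y). loewner_le x y \<or> loewner_le y x}"
  proof (rule iffD1[OF closed_approachable[OF closed_loewner_comparable]], intro allI impI)
    fix e :: real assume "e > 0"
    then obtain a b where ab: "dist a x < e/2" "dist b y < e/2" "loewner_le a b \<or> loewner_le b a"
      using assms[of "e/2"] by auto
    have "dist (a, b) (x, y) \<le> dist a x + dist b y"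
      by (simp add: dist_Pair_Pair sqrt_sum_squares_le_sum_abs[THEN order_trans])
    then show "\<exists>p\<in>{(x, y). loewner_le x y \<or> loewner_le y x}. dist p (x, y) < e"
      using ab by (intro bexI[of _ "(a, b)"]) auto
  qed
  then show ?thesis by simp
qed

text \<open>The quadratic forms of the path are monotone real functions, and the entries are recovered
  from them by polarization.\<close>
lemma loewner_mono_borel_measurable:
  fixes f :: "real \<Rightarrow> real^'n^'n"
  assumes sym: "\<And>s. transpose (f s) = f s"
    and mono: "\<And>s t. s \<le> t \<Longrightarrow> loewner_le (f s) (f t)"
  shows "f \<in> borel_measurable borel"
proof -
  have quad: "(\<lambda>s. v \<bullet> (f s *v v)) \<in> borel_measurable borel" for v
  proof (rule borel_measurable_mono, rule monoI)
    fix s t :: real assume "s \<le> t"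
    then have "0 \<le> v \<bullet> ((f t - f s) *v v)" using mono by (auto simp: loewner_le_def psd_def)
    then show "v \<bullet> (f s *v v) \<le> v \<bullet> (f t *v v)"
      by (simp add: matrix_vector_mult_diff_rdistrib inner_diff_right)
  qed
  have polar: "f s $ i $ j = ((axis i 1 + axis j 1) \<bullet> (f s *v (axis i 1 + axis j 1))
      - axis i 1 \<bullet> (f s *v axis i 1) - axis j 1 \<bullet> (f s *v axis j 1)) / 2" for s i j
  proof (cases "i = j")
    case True
    have "axis i (1::real) + axis i 1 = axis i 2" by (simp add: axis_def vec_eq_iff)
    then show ?thesis
      using True by (simp add: matrix_vector_right_distrib inner_add_left inner_add_right inner_axis_mult_axis)
  next
    case False
    have "f s $ j $ i = f s $ i $ j" using sym[of s] unfolding transpose_def by (metis vec_lambda_beta)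
    then show ?thesis using quadratic_form_axis_pair[of i j 1 "f s"] by (simp add: inner_axis_mult_axis)
  qed
  have entry: "(\<lambda>s. f s $ i $ j) \<in> borel_measurable borel" for i j
    unfolding polar by (intro borel_measurable_divide borel_measurable_diff quad borel_measurable_const)
  show ?thesis
  proof (subst borel_measurable_euclidean_space, intro ballI)
    fix b :: "real^'n^'n" assume "b \<in> Basis"
    then obtain i u where "b = axis i u" "u \<in> Basis" by (auto simp: Basis_vec_def)
    moreover from this obtain j where "u = axis j 1" by (auto simp: Basis_vec_def)
    ultimately have "b = axis i (axis j 1)" by simp
    then have "(\<lambda>s. f s \<bullet> b) = (\<lambda>s. f s $ i $ j)" by (simp add: inner_axis)
    then show "(\<lambda>s. f s \<bullet> b) \<in> borel_measurable borel" using entry by simp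
  qed
qed


section \<open>Supports of Borel measures\<close>

lemma sets_eq_borel_imp_space_UNIV: "sets M = sets borel \<Longrightarrow> space M = UNIV"
  by (metis sets_eq_imp_space_eq space_borel)

lemma msupport_disjoint_null_ball:
  fixes \<mu> :: "'a::metric_space measure"
  assumes "sets \<mu> = sets borel" and "emeasure \<mu> (ball x e) = 0"
  shows "ball x e \<inter> msupport \<mu> = {}"
proof -
  have "y \<notin> msupport \<mu>" if "y \<in> ball x e" for y
  proof -
    obtain d where "d > 0" "ball y d \<subseteq> ball x e" using openE[OF open_ball \<open>y \<in> ball x e\<close>] .
    moreover from this have "emeasure \<mu> (ball y d) \<le> emeasure \<mu> (ball x e)"
      by (intro emeasure_mono) (auto simp: assms(1))
    ultimately show ?thesis using assms(2) by (auto simp: msupport_def)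
  qed
  then show ?thesis by blast
qed

lemma closed_msupport:
  fixes \<mu> :: "'a::metric_space measure"
  assumes "sets \<mu> = sets borel"
  shows "closed (msupport \<mu>)"
  unfolding closed_def open_contains_ball
proof
  fix x assume "x \<in> - msupport \<mu>"
  then obtain e where "e > 0" "emeasure \<mu> (ball x e) = 0" by (auto simp: msupport_def not_less)
  then show "\<exists>e>0. ball x e \<subseteq> - msupport \<mu>"
    using msupport_disjoint_null_ball[OF assms] by blast
qed

lemma emeasure_compl_msupport:
  fixes \<mu> :: "'a::{metric_space, second_countable_topology} measure"
  assumes S: "sets \<mu> = sets borel"
  shows "emeasure \<mu> (- msupport \<mu>) = 0"
proof -
  define F where "F = {ball x e | x e. emeasure \<mu> (ball x e) = 0}"
  obtain F' where F': "F' \<subseteq> F" "countable F'" "\<Union>F' = \<Union>F"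
    using Lindelof[of F] by (auto simp: F_def)
  have "\<Union>F = - msupport \<mu>"
  proof
    show "\<Union>F \<subseteq> - msupport \<mu>" using msupport_disjoint_null_ball[OF S] by (auto simp: F_def)
    show "- msupport \<mu> \<subseteq> \<Union>F"
    proof
      fix x assume "x \<in> - msupport \<mu>"
      then obtain e where "e > 0" "emeasure \<mu> (ball x e) = 0" by (auto simp: msupport_def not_less)
      then show "x \<in> \<Union>F" unfolding F_def using centre_in_ball by blast
    qed
  qed
  moreover have "(\<Union>T\<in>F'. T) \<in> null_sets \<mu>"
    using F'(1,2) by (intro null_sets_UN') (auto simp: F_def S null_sets_def)
  ultimately show ?thesis using F'(3) by auto
qed

lemma msupport_meets_ball:
  fixes \<mu> :: "'a::{metric_space, second_countable_topology} measure"
  assumes "sets \<mu> = sets borel" and "0 < emeasure \<mu> (ball x e)"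
  shows "\<exists>y\<in>msupport \<mu>. dist x y < e"
proof (rule ccontr)
  assume "\<not> ?thesis"
  then have "ball x e \<subseteq> - msupport \<mu>" by auto
  then have "emeasure \<mu> (ball x e) \<le> emeasure \<mu> (- msupport \<mu>)"
    using closed_msupport[OF assms(1)] by (intro emeasure_mono) (auto simp: assms(1))
  then show False using assms(2) emeasure_compl_msupport[OF assms(1)] by simp
qed

lemma msupport_subset:
  fixes \<mu> :: "'a::metric_space measure"
  assumes S: "sets \<mu> = sets borel" and "prob_space \<mu>" and K: "closed K" "emeasure \<mu> K = 1"
  shows "msupport \<mu> \<subseteq> K"
proof -
  interpret prob_space \<mu> by fact
  have "emeasure \<mu> (space \<mu> - K) = 0"
    using emeasure_compl[of K] K S emeasure_space_1 by simp
  then have "emeasure \<mu> (- K) = 0"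
    by (simp add: Compl_eq_Diff_UNIV sets_eq_borel_imp_space_UNIV[OF S])
  moreover have "emeasure \<mu> (ball x e) \<le> emeasure \<mu> (- K)" if "ball x e \<subseteq> - K" for x e
    using that S K(1) by (intro emeasure_mono) auto
  ultimately have disj: "ball x e \<inter> msupport \<mu> = {}" if "ball x e \<subseteq> - K" for x e
    using that by (intro msupport_disjoint_null_ball[OF S]) (simp add: le_zero_eq)
  show ?thesis
  proof
    fix x assume x: "x \<in> msupport \<mu>"
    show "x \<in> K"
    proof (rule ccontr)
      assume "x \<notin> K"
      then obtain e where "e > 0" "ball x e \<subseteq> - K"
        using K(1) unfolding closed_def open_contains_ball by blast
      then show False using disj x centre_in_ball by blast
    qed
  qed
qed

lemma AE_in_msupport:
  fixes \<mu> :: "'a::{metric_space, second_countable_topology} measure"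
  assumes "sets \<mu> = sets borel"
  shows "AE x in \<mu>. x \<in> msupport \<mu>"
  using assms emeasure_compl_msupport[OF assms] closed_msupport[OF assms]
  by (intro AE_I'[of "- msupport \<mu>"]) (auto simp: null_sets_def)


section \<open>Laws of paths driven by a uniform variable\<close>

lemma prob_space_unif01: "prob_space unif01"
  unfolding unif01_def by (rule prob_space_uniform_measure) auto

lemma sets_unif01 [simp]: "sets unif01 = sets borel"
  unfolding unif01_def by simp

lemma space_unif01 [simp]: "space unif01 = UNIV"
  unfolding unif01_def by simp

lemma measurable_unif01 [simp]: "measurable unif01 M = measurable borel M"
  by (rule measurable_cong_sets) auto

lemma emeasure_unif01: "A \<in> sets borel \<Longrightarrow> emeasure unif01 A = emeasure lborel (A \<inter> {0..<1})"
  unfolding unif01_def by (subst emeasure_uniform_measure) (auto simp: Int_commute divide_ennreal_def)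

lemma AE_unif01_in_Ioo: "AE u in unif01. u \<in> {0<..<1}"
proof -
  interpret prob_space unif01 by (rule prob_space_unif01)
  have "{0<..<1::real} \<inter> {0..<1} = {0<..<1}" by auto
  then have "emeasure unif01 {0<..<1} = 1" by (simp add: emeasure_unif01)
  then show ?thesis by (subst AE_in_set_eq_1) (auto simp: emeasure_eq_measure)
qed

lemma distr_unif01_pos_imp_ex:
  assumes q: "q \<in> borel_measurable borel" and A: "A \<in> sets borel"
    and pos: "0 < emeasure (distr unif01 borel q) A"
  shows "\<exists>u\<in>{0..<1}. q u \<in> A"
proof (rule ccontr)
  assume "\<not> ?thesis"
  then have "q -` A \<inter> {0..<1} = {}" by auto
  then have "emeasure unif01 (q -` A) = 0"
    using measurable_sets_borel[OF q A] by (simp add: emeasure_unif01)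
  then show False using pos q A by (simp add: emeasure_distr)
qed

lemma distr_unif01_eq_distr_restrict_Ioo:
  assumes f: "f \<in> borel_measurable borel"
  shows "distr unif01 borel f = distr (restrict_space lborel {0<..<1}) borel f"
proof (rule measure_eqI)
  fix A assume "A \<in> sets (distr unif01 borel f)"
  then have A: "A \<in> sets borel" by simp
  have fA: "f -` A \<inter> {0<..<1} \<in> sets lborel" using measurable_sets_borel[OF f A] by simp
  have "emeasure (distr unif01 borel f) A = emeasure lborel (f -` A \<inter> {0..<1})"
    using f A measurable_sets_borel[OF f A] by (simp add: emeasure_distr emeasure_unif01)
  also have "f -` A \<inter> {0..<1} = (f -` A \<inter> {0<..<1}) \<union> (f -` A \<inter> {0})"
    by auto
  also have "emeasure lborel \<dots> = emeasure lborel (f -` A \<inter> {0<..<1})"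
    by (rule emeasure_Un_null_set[OF fA]) (auto intro: finite_imp_null_set_lborel finite_subset[of _ "{0}"])
  also have "\<dots> = emeasure (distr (restrict_space lborel {0<..<1}) borel f) A"
    using f A by (subst emeasure_distr)
      (auto simp: space_restrict_space emeasure_restrict_space measurable_restrict_space1)
  finally show "emeasure (distr unif01 borel f) A = emeasure (distr (restrict_space lborel {0<..<1}) borel f) A" .
qed simp

text \<open>The quantile function is only monotone on \<open>{0<..<1}\<close>; its value at 0 is junk, which is
  harmless because \<open>{0}\<close> is a null set.\<close>
lemma real_distribution_quantile:
  assumes "real_distribution \<nu>"
  obtains I where "I \<in> borel_measurable borel" "mono_on {0<..<1} I" "distr unif01 borel I = \<nu>"
proof -
  interpret cdf_distribution \<nu> using assms by (simp add: cdf_distribution_def)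
  define I where "I u = (if u \<in> {0<..<1} then Inf {x. u \<le> cdf \<nu> x} else 0)" for u
  have "(\<lambda>u. Inf {x. u \<le> cdf \<nu> x}) \<in> borel_measurable (restrict_space borel {0<..<1::real})"
    by (rule measurable_CI)
  then have meas: "I \<in> borel_measurable borel"
    unfolding I_def by (subst (asm) measurable_restrict_space_iff) auto
  moreover have "mono_on {0<..<1} I"
    using mono_I unfolding I_def mono_on_def by auto
  moreover have "distr unif01 borel I = \<nu>"
  proof -
    have "distr (restrict_space lborel {0<..<1}) borel I
        = distr (restrict_space lborel {0<..<1::real}) borel (\<lambda>u. Inf {x. u \<le> cdf \<nu> x})"
      by (rule distr_cong) (auto simp: space_restrict_space I_def)
    then show ?thesis using distr_I_eq_M distr_unif01_eq_distr_restrict_Ioo[OF meas] by simp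
  qed
  ultimately show ?thesis by (rule that)
qed

lemma prob_onD:
  assumes "\<mu> \<in> prob_on K"
  shows "prob_space \<mu>" "sets \<mu> = sets borel" "emeasure \<mu> K = 1"
  using assms by (auto simp: prob_on_def)

lemma msupport_prob_on:
  fixes K :: "(real^'n^'n) set"
  assumes "compact K" and \<mu>: "\<mu> \<in> prob_on K"
  shows "msupport \<mu> \<subseteq> K" "compact (msupport \<mu>)" "msupport \<mu> \<noteq> {}"
proof -
  interpret prob_space \<mu> using prob_onD[OF \<mu>] by simp
  note sets_\<mu> = prob_onD(2)[OF \<mu>]
  show "msupport \<mu> \<subseteq> K"
    using prob_onD[OF \<mu>] compact_imp_closed[OF assms(1)] by (intro msupport_subset) auto
  then show "compact (msupport \<mu>)"
    using closed_msupport[OF sets_\<mu>] assms(1) by (metis compact_Int_closed inf.absorb2)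
  show "msupport \<mu> \<noteq> {}"
    using emeasure_compl_msupport[OF sets_\<mu>] emeasure_space_1 sets_eq_borel_imp_space_UNIV[OF sets_\<mu>]
    by force
qed

lemma monotone_measuresE:
  assumes "\<mu> \<in> monotone_measures"
  obtains q where "q \<in> borel_measurable borel" "\<And>u. u \<in> {0..<1} \<Longrightarrow> q u \<in> psd_set"
    "\<And>u v. u \<in> {0..<1} \<Longrightarrow> v \<in> {0..<1} \<Longrightarrow> u \<le> v \<Longrightarrow> loewner_le (q u) (q v)"
    "\<mu> = distr unif01 borel q"
  using assms unfolding monotone_measures_def by (auto simp: measurable_lborel1)

lemma monotone_measuresI:
  assumes "q \<in> borel_measurable borel" "\<And>u. u \<in> {0..<1} \<Longrightarrow> q u \<in> psd_set"
    "\<And>u v. u \<in> {0..<1} \<Longrightarrow> v \<in> {0..<1} \<Longrightarrow> u \<le> v \<Longrightarrow> loewner_le (q u) (q v)"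
  shows "distr unif01 borel q \<in> monotone_measures"
  using assms unfolding monotone_measures_def by (auto simp: measurable_lborel1)


section \<open>Monotone measures and totally ordered supports\<close>

lemma msupport_distr_unif01_totally_ordered:
  assumes q: "q \<in> borel_measurable borel"
    and mono: "\<And>u v. u \<in> {0..<1} \<Longrightarrow> v \<in> {0..<1} \<Longrightarrow> u \<le> v \<Longrightarrow> loewner_le (q u) (q v)"
  shows "totally_ordered (msupport (distr unif01 borel q))"
  unfolding totally_ordered_def
proof (intro ballI loewner_comparable_approx)
  fix x y e assume x: "x \<in> msupport (distr unif01 borel q)" and y: "y \<in> msupport (distr unif01 borel q)"
    and e: "(e::real) > 0"
  obtain u where u: "u \<in> {0..<1}" "q u \<in> ball x e"
    using distr_unif01_pos_imp_ex[OF q, of "ball x e"] x e by (auto simp: msupport_def)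
  obtain v where v: "v \<in> {0..<1}" "q v \<in> ball y e"
    using distr_unif01_pos_imp_ex[OF q, of "ball y e"] y e by (auto simp: msupport_def)
  have "loewner_le (q u) (q v) \<or> loewner_le (q v) (q u)"
    using mono[OF u(1) v(1)] mono[OF v(1) u(1)] by linarith
  then show "\<exists>a b. dist a x < e \<and> dist b y < e \<and> (loewner_le a b \<or> loewner_le b a)"
    using u(2) v(2) by (intro exI[of _ "q u"] exI[of _ "q v"]) (auto simp: dist_commute)
qed

lemma compact_real_mono_retraction:
  fixes T :: "real set"
  assumes "compact T" "T \<noteq> {}"
  obtains \<rho> where "mono \<rho>" "\<And>s. \<rho> s \<in> T" "\<And>t. t \<in> T \<Longrightarrow> \<rho> t = t"
proof
  have bdd: "bdd_below T" "bdd_above (T \<inter> {..s})" for s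
    using assms(1) by (auto intro: compact_imp_bounded bounded_imp_bdd_below bdd_above_Int2)
  have closed: "closed (T \<inter> {..s})" for s
    using assms(1) by (intro closed_Int compact_imp_closed closed_atMost)
  have Inf: "Inf T \<in> T" "\<And>t. t \<in> T \<Longrightarrow> Inf T \<le> t"
    using assms bdd(1) by (auto intro: closed_contains_Inf compact_imp_closed cInf_lower)
  define \<rho> where "\<rho> s = (if s < Inf T then Inf T else Sup (T \<inter> {..s}))" for s
  have ne: "T \<inter> {..s} \<noteq> {}" if "\<not> s < Inf T" for s
    using that Inf(1) by auto
  show \<rho>T: "\<rho> s \<in> T" for s
    using Inf(1) closed_contains_Sup[OF ne bdd(2) closed] by (auto simp: \<rho>_def)
  show "\<rho> t = t" if "t \<in> T" for t
    using that Inf(2)[OF that] by (auto simp: \<rho>_def intro!: cSup_eq_maximum)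
  show "mono \<rho>"
  proof (rule monoI)
    fix s s' :: real assume "s \<le> s'"
    then show "\<rho> s \<le> \<rho> s'"
      using Inf(2)[OF \<rho>T[of s']] ne bdd(2)
      by (cases "s < Inf T"; cases "s' < Inf T") (auto simp: \<rho>_def intro!: cSup_subset_mono)
  qed
qed

text \<open>The trace is injective on a totally ordered set; \<open>g\<close> inverts it after retracting
  \<open>\<real>\<close> monotonically onto the image of the trace.\<close>
lemma totally_ordered_trace_section:
  fixes S :: "(real^'n^'n) set"
  assumes "compact S" "S \<noteq> {}" and tot: "totally_ordered S"
  obtains g where "\<And>t. g t \<in> S" "\<And>s t. s \<le> t \<Longrightarrow> loewner_le (g s) (g t)"
    "\<And>x. x \<in> S \<Longrightarrow> g (trace x) = x"
proof -
  have comp: "loewner_le x y \<or> loewner_le y x" if "x \<in> S" "y \<in> S" for x y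
    using tot that unfolding totally_ordered_def by blast
  have inj: "inj_on trace S"
    by (rule inj_onI) (metis comp loewner_le_trace_eq_imp_eq)
  obtain \<rho> where \<rho>: "mono \<rho>" "\<And>s. \<rho> s \<in> trace ` S" "\<And>t. t \<in> trace ` S \<Longrightarrow> \<rho> t = t"
    using compact_real_mono_retraction[of "trace ` S"] assms(1,2)
      compact_continuous_image[OF continuous_on_trace] by blast
  define g where "g t = inv_into S trace (\<rho> t)" for t
  have gS: "g t \<in> S" and trace_g: "trace (g t) = \<rho> t" for t
    using \<rho>(2)[of t] unfolding g_def by (auto intro: inv_into_into f_inv_into_f)
  have "loewner_le (g s) (g t)" if "s \<le> t" for s t
    using comp[OF gS gS, of s t]
  proof
    assume "loewner_le (g t) (g s)"
    then have "\<rho> t \<le> \<rho> s" using loewner_le_trace_le trace_g by metis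
    then have "\<rho> s = \<rho> t" using \<rho>(1) that by (simp add: antisym monoD)
    then have "g s = g t" unfolding g_def by simp
    then show ?thesis by (simp add: loewner_le_refl)
  qed
  moreover have "g (trace x) = x" if "x \<in> S" for x
    using that inj \<rho>(3) unfolding g_def by simp
  ultimately show ?thesis using gS that by blast
qed

lemma totally_ordered_has_least:
  fixes S :: "(real^'n^'n) set"
  assumes "compact S" "S \<noteq> {}" and tot: "totally_ordered S"
  obtains x0 where "x0 \<in> S" "\<And>x. x \<in> S \<Longrightarrow> loewner_le x0 x"
proof -
  obtain x0 where x0: "x0 \<in> S" "\<And>x. x \<in> S \<Longrightarrow> trace x0 \<le> trace x"
    using continuous_attains_inf[OF assms(1,2) continuous_on_trace] by blast
  have "loewner_le x0 x" if "x \<in> S" for x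
    using tot x0 that unfolding totally_ordered_def
    by (metis antisym loewner_le_trace_eq_imp_eq loewner_le_trace_le)
  then show ?thesis using x0(1) that by blast
qed

text \<open>The trace parametrizes the support monotonically, so \<open>\<mu>\<close> is the law of \<open>g\<close> applied to
  the quantile function of the trace of \<open>\<mu>\<close>.\<close>
lemma totally_ordered_msupport_imp_monotone:
  fixes K :: "(real^'n^'n) set"
  assumes K: "compact K" "K \<subseteq> psd_set" and \<mu>: "\<mu> \<in> prob_on K"
    and tot: "totally_ordered (msupport \<mu>)"
  shows "\<mu> \<in> monotone_measures"
proof -
  interpret prob_space \<mu> using prob_onD[OF \<mu>] by simp
  note sets_\<mu> = prob_onD(2)[OF \<mu>]
  define S where "S = msupport \<mu>"
  have SK: "S \<subseteq> K" and "compact S" and "S \<noteq> {}"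
    unfolding S_def using msupport_prob_on[OF K(1) \<mu>] by auto
  have AE_S: "AE x in \<mu>. x \<in> S" unfolding S_def by (rule AE_in_msupport[OF sets_\<mu>])
  obtain g where gS: "\<And>t. g t \<in> S" and g_mono: "\<And>s t. s \<le> t \<Longrightarrow> loewner_le (g s) (g t)"
    and g_trace: "\<And>x. x \<in> S \<Longrightarrow> g (trace x) = x"
    using totally_ordered_trace_section[OF \<open>compact S\<close> \<open>S \<noteq> {}\<close>] tot unfolding S_def by metis
  obtain x0 where x0: "x0 \<in> S" "\<And>x. x \<in> S \<Longrightarrow> loewner_le x0 x"
    using totally_ordered_has_least[OF \<open>compact S\<close> \<open>S \<noteq> {}\<close>] tot unfolding S_def by metis
  have psd_S: "x \<in> psd_set" if "x \<in> S" for x using that SK K(2) by auto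
  have g_meas: "g \<in> borel_measurable borel"
    using gS psd_S g_mono by (intro loewner_mono_borel_measurable) (auto simp: psd_set_def psd_def)
  have trace_meas: "trace \<in> borel_measurable \<mu>" using sets_\<mu> by simp
  obtain I where I_meas: "I \<in> borel_measurable borel" and I_mono: "mono_on {0<..<1} I"
    and I_distr: "distr unif01 borel I = distr \<mu> borel trace"
    using real_distribution_quantile[OF real_distribution_distr[OF trace_meas]] by metis
  have gI_meas: "(\<lambda>u. g (I u)) \<in> borel_measurable borel"
    using measurable_comp[OF I_meas g_meas] by (simp add: comp_def)
  define q where "q u = (if u \<in> {0<..<1} then g (I u) else x0)" for u
  have q_meas: "q \<in> borel_measurable borel"
    unfolding q_def by (intro measurable_If_set gI_meas) auto
  have "\<mu> = distr \<mu> borel (\<lambda>x. x)" using sets_\<mu> by (simp add: distr_id2)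
  also have "\<dots> = distr \<mu> borel (g \<circ> trace)"
    using AE_S g_trace sets_\<mu> measurable_comp[OF trace_meas g_meas]
    by (intro distr_cong_AE) (auto elim: AE_mp)
  also have "\<dots> = distr unif01 borel (g \<circ> I)"
    using I_distr trace_meas I_meas g_meas by (simp add: distr_distr[symmetric])
  also have "\<dots> = distr unif01 borel q"
    using AE_unif01_in_Ioo q_meas gI_meas by (intro distr_cong_AE) (auto simp: q_def comp_def elim: AE_mp)
  finally have "\<mu> = distr unif01 borel q" .
  moreover have "loewner_le (q u) (q v)" if "u \<in> {0..<1}" "v \<in> {0..<1}" "u \<le> v" for u v
    using that g_mono I_mono x0 gS unfolding q_def mono_on_def by (auto simp: loewner_le_refl)
  ultimately show ?thesis
    using monotone_measuresI[OF q_meas] psd_S gS x0(1) unfolding q_def by auto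
qed

lemma mono_prob_on_iff_totally_ordered_msupport:
  fixes K :: "(real^'n^'n) set"
  assumes "compact K" "K \<subseteq> psd_set" and \<mu>: "\<mu> \<in> prob_on K"
  shows "\<mu> \<in> mono_prob_on K \<longleftrightarrow> totally_ordered (msupport \<mu>)"
proof
  assume "\<mu> \<in> mono_prob_on K"
  then obtain q where "q \<in> borel_measurable borel" "\<mu> = distr unif01 borel q"
    "\<And>u v. u \<in> {0..<1} \<Longrightarrow> v \<in> {0..<1} \<Longrightarrow> u \<le> v \<Longrightarrow> loewner_le (q u) (q v)"
    unfolding mono_prob_on_def by (auto elim: monotone_measuresE)
  then show "totally_ordered (msupport \<mu>)" by (metis msupport_distr_unif01_totally_ordered)
next
  assume "totally_ordered (msupport \<mu>)"
  then show "\<mu> \<in> mono_prob_on K"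
    using totally_ordered_msupport_imp_monotone[OF assms] \<mu> by (simp add: mono_prob_on_def)
qed

section \<open>Wasserstein distance and closedness\<close>

lemma product_coupling:
  fixes \<mu> \<nu> :: "'a::topological_space measure"
  assumes "prob_space \<mu>" "prob_space \<nu>" and sets: "sets \<mu> = sets borel" "sets \<nu> = sets borel"
  shows "\<mu> \<Otimes>\<^sub>M \<nu> \<in> couplings \<mu> \<nu>"
proof -
  interpret \<mu>: prob_space \<mu> by fact
  interpret \<nu>: prob_space \<nu> by fact
  interpret pair_prob_space \<mu> \<nu> ..
  have "distr (\<mu> \<Otimes>\<^sub>M \<nu>) borel fst = distr (\<mu> \<Otimes>\<^sub>M \<nu>) \<mu> fst"
    by (rule distr_cong) (auto simp: sets)
  also have "\<dots> = \<mu>" by (rule \<nu>.distr_pair_fst)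
  finally have fst: "distr (\<mu> \<Otimes>\<^sub>M \<nu>) borel fst = \<mu>" .
  have snd: "snd \<in> measurable (\<mu> \<Otimes>\<^sub>M \<nu>) borel"
    by (subst measurable_cong_sets[OF refl sets(2)[symmetric]]) (rule measurable_snd)
  have "distr (\<mu> \<Otimes>\<^sub>M \<nu>) borel snd
      = distr (distr (\<nu> \<Otimes>\<^sub>M \<mu>) (\<mu> \<Otimes>\<^sub>M \<nu>) (\<lambda>(x, y). (y, x))) borel snd"
    by (simp only: distr_pair_swap[symmetric])
  also have "\<dots> = distr (\<nu> \<Otimes>\<^sub>M \<mu>) borel (snd \<circ> (\<lambda>(x, y). (y, x)))"
    by (rule distr_distr[OF snd measurable_pair_swap'])
  also have "\<dots> = distr (\<nu> \<Otimes>\<^sub>M \<mu>) \<nu> fst"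
    by (rule distr_cong) (auto simp: sets)
  also have "\<dots> = \<nu>" by (rule \<mu>.distr_pair_fst)
  finally show ?thesis
    using fst prob_space_axioms sets_pair_measure_cong[OF sets] by (simp add: couplings_def)
qed

lemma wasserstein1_nonneg:
  assumes "couplings \<mu> \<nu> \<noteq> {}"
  shows "0 \<le> wasserstein1 \<mu> \<nu>"
  unfolding wasserstein1_def using assms
  by (intro cInf_greatest) (auto intro!: integral_nonneg_AE simp: case_prod_beta)

lemma wasserstein1_le_coupling:
  assumes "\<pi> \<in> couplings \<mu> \<nu>"
  shows "wasserstein1 \<mu> \<nu> \<le> (\<integral>p. dist (fst p) (snd p) \<partial>\<pi>)"
  unfolding wasserstein1_def case_prod_beta
  by (rule cInf_lower) (auto intro!: imageI assms bdd_belowI[of _ 0] integral_nonneg_AE)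

lemma wasserstein1_less_imp_coupling:
  assumes "couplings \<mu> \<nu> \<noteq> {}" "wasserstein1 \<mu> \<nu> < c"
  obtains \<pi> where "\<pi> \<in> couplings \<mu> \<nu>" "(\<integral>p. dist (fst p) (snd p) \<partial>\<pi>) < c"
  using assms unfolding wasserstein1_def case_prod_beta
  by (subst (asm) cInf_less_iff) (auto intro!: bdd_belowI[of _ 0] integral_nonneg_AE)

lemma wasserstein1_distr_le:
  fixes f g :: "'b \<Rightarrow> 'a::{metric_space, second_countable_topology}"
  assumes "prob_space M" and f: "f \<in> borel_measurable M" and g: "g \<in> borel_measurable M"
  shows "wasserstein1 (distr M borel f) (distr M borel g) \<le> (\<integral>u. dist (f u) (g u) \<partial>M)"
proof -
  interpret prob_space M by fact
  have fg: "(\<lambda>u. (f u, g u)) \<in> measurable M (borel \<Otimes>\<^sub>M borel)"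
    using f g by measurable
  define \<pi> where "\<pi> = distr M (borel \<Otimes>\<^sub>M borel) (\<lambda>u. (f u, g u))"
  have "\<pi> \<in> couplings (distr M borel f) (distr M borel g)"
    unfolding couplings_def \<pi>_def using fg
    by (auto simp: prob_space_distr distr_distr comp_def)
  moreover have "(\<integral>p. dist (fst p) (snd p) \<partial>\<pi>) = (\<integral>u. dist (f u) (g u) \<partial>M)"
    unfolding \<pi>_def using fg by (subst integral_distr) auto
  ultimately show ?thesis using wasserstein1_le_coupling by metis
qed

lemma AE_coupling_in:
  fixes \<mu> \<nu> :: "'a::topological_space measure"
  assumes \<pi>: "\<pi> \<in> couplings \<mu> \<nu>" and K: "K \<in> sets borel"
    and "AE x in \<mu>. x \<in> K" "AE y in \<nu>. y \<in> K"
  shows "AE p in \<pi>. fst p \<in> K \<and> snd p \<in> K"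
proof -
  have sets_\<pi>: "sets \<pi> = sets (borel \<Otimes>\<^sub>M borel)" using \<pi> by (simp add: couplings_def)
  have fst: "fst \<in> measurable \<pi> borel" and snd: "snd \<in> measurable \<pi> borel"
    by (simp_all add: measurable_cong_sets[OF sets_\<pi> refl])
  have "distr \<pi> borel fst = \<mu>" "distr \<pi> borel snd = \<nu>" using \<pi> by (simp_all add: couplings_def)
  then have "AE x in distr \<pi> borel fst. x \<in> K" "AE x in distr \<pi> borel snd. x \<in> K"
    using assms(3,4) by auto
  then have "AE p in \<pi>. fst p \<in> K" "AE p in \<pi>. snd p \<in> K"
    using K by (auto simp: AE_distr_iff[OF fst] AE_distr_iff[OF snd])
  then show ?thesis by eventually_elim simp
qed

text \<open>Markov's inequality for the transport cost: mass of \<open>\<mu>\<close> near \<open>x\<close> that is not matched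
  with mass of \<open>\<nu>\<close> near \<open>x\<close> has to travel at least distance \<open>r\<close>.\<close>
lemma measure_ball_le_coupling_cost:
  fixes \<mu> \<nu> :: "'a::{metric_space, second_countable_topology} measure"
  assumes \<pi>: "\<pi> \<in> couplings \<nu> \<mu>" and int: "integrable \<pi> (\<lambda>p. dist (fst p) (snd p))" and r: "r > 0"
  shows "measure \<mu> (ball x r) \<le> measure \<nu> (ball x (2 * r)) + (\<integral>p. dist (fst p) (snd p) \<partial>\<pi>) / r"
proof -
  interpret prob_space \<pi> using \<pi> by (simp add: couplings_def)
  have sets_\<pi>: "sets \<pi> = sets (borel \<Otimes>\<^sub>M borel)" using \<pi> by (simp add: couplings_def)
  have space_\<pi>: "space \<pi> = UNIV" using sets_eq_imp_space_eq[OF sets_\<pi>] by (simp add: space_pair_measure)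
  have fst: "fst \<in> measurable \<pi> borel" and snd: "snd \<in> measurable \<pi> borel"
    by (simp_all add: measurable_cong_sets[OF sets_\<pi> refl])
  have marg: "measure \<nu> B = measure \<pi> (fst -` B)" "measure \<mu> B = measure \<pi> (snd -` B)"
    if "B \<in> sets borel" for B
    using \<pi> measure_distr[OF fst that] measure_distr[OF snd that] space_\<pi> by (auto simp: couplings_def)
  define far where "far = {p \<in> space \<pi>. r \<le> dist (fst p) (snd p)}"
  have far: "far \<in> sets \<pi>" unfolding far_def using fst snd by measurable
  have ball: "fst -` ball x (2 * r) \<in> sets \<pi>" using measurable_sets[OF fst, of "ball x (2 * r)"] space_\<pi> by simp
  have "snd -` ball x r \<subseteq> fst -` ball x (2 * r) \<union> far"
    using dist_triangle_less_add[of x _ r _ r] space_\<pi> by (force simp: far_def dist_commute)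
  then have "measure \<mu> (ball x r) \<le> measure \<pi> (fst -` ball x (2 * r) \<union> far)"
    using marg ball far by (auto intro!: finite_measure_mono)
  also have "\<dots> \<le> measure \<nu> (ball x (2 * r)) + measure \<pi> far"
    using measure_Un_le[OF ball far] marg by simp
  also have "measure \<pi> far \<le> (\<integral>p. dist (fst p) (snd p) \<partial>\<pi>) / r"
    unfolding far_def using int r by (intro integral_Markov_inequality_measure[where A="space \<pi>"]) auto
  finally show ?thesis by simp
qed

lemma prob_on_AE_in:
  assumes "\<mu> \<in> prob_on K" "closed K"
  shows "AE x in \<mu>. x \<in> K"
proof -
  interpret prob_space \<mu> using prob_onD[OF assms(1)] by simp
  show ?thesis
    using prob_onD[OF assms(1)] assms(2) by (subst AE_in_set_eq_1) (auto simp: emeasure_eq_measure)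
qed

lemma integrable_coupling_cost:
  fixes \<mu> \<nu> :: "'a::{metric_space, second_countable_topology} measure"
  assumes \<pi>: "\<pi> \<in> couplings \<mu> \<nu>" and K: "bounded K" "K \<in> sets borel"
    and "AE x in \<mu>. x \<in> K" "AE y in \<nu>. y \<in> K"
  shows "integrable \<pi> (\<lambda>p. dist (fst p) (snd p))"
proof -
  interpret prob_space \<pi> using \<pi> by (simp add: couplings_def)
  have sets_\<pi>: "sets \<pi> = sets (borel \<Otimes>\<^sub>M borel)" using \<pi> by (simp add: couplings_def)
  have "AE p in \<pi>. norm (dist (fst p) (snd p)) \<le> diameter K"
    using AE_coupling_in[OF \<pi> K(2) assms(4,5)] by eventually_elim (simp add: diameter_bounded_bound K(1))
  moreover have "(\<lambda>p. dist (fst p) (snd p)) \<in> borel_measurable \<pi>"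
    by (simp add: measurable_cong_sets[OF sets_\<pi> refl])
  ultimately show ?thesis by (rule integrable_const_bound)
qed

lemma wasserstein1_tendsto_imp_emeasure_ball_pos:
  fixes K :: "(real^'n^'n) set"
  assumes "compact K" and \<mu>s: "\<And>n. \<mu>s n \<in> prob_on K" and \<mu>: "\<mu> \<in> prob_on K"
    and lim: "(\<lambda>n. wasserstein1 (\<mu>s n) \<mu>) \<longlonglongrightarrow> 0"
    and x: "x \<in> msupport \<mu>" and e: "e > 0"
  shows "eventually (\<lambda>n. 0 < emeasure (\<mu>s n) (ball x e)) sequentially"
proof -
  interpret \<mu>: prob_space \<mu> using prob_onD[OF \<mu>] by simp
  define m where "m = measure \<mu> (ball x (e/2))"
  have "m > 0" using x e by (auto simp: msupport_def m_def \<mu>.emeasure_eq_measure)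
  have "eventually (\<lambda>n. wasserstein1 (\<mu>s n) \<mu> < m * e / 4) sequentially"
    using lim \<open>m > 0\<close> e by (intro order_tendstoD(2)) auto
  then show ?thesis
  proof eventually_elim
    case (elim n)
    interpret \<mu>n: prob_space "\<mu>s n" using prob_onD[OF \<mu>s] by simp
    have ne: "couplings (\<mu>s n) \<mu> \<noteq> {}"
      using product_coupling prob_onD[OF \<mu>s] prob_onD[OF \<mu>] by blast
    obtain \<pi> where \<pi>: "\<pi> \<in> couplings (\<mu>s n) \<mu>" "(\<integral>p. dist (fst p) (snd p) \<partial>\<pi>) < m * e / 4"
      using wasserstein1_less_imp_coupling[OF ne elim] by blast
    have "integrable \<pi> (\<lambda>p. dist (fst p) (snd p))"
      using assms(1) \<mu>s \<mu> by (intro integrable_coupling_cost[OF \<pi>(1)] prob_on_AE_in)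
        (auto intro: compact_imp_bounded compact_imp_closed borel_closed)
    then have "m \<le> measure (\<mu>s n) (ball x e) + (\<integral>p. dist (fst p) (snd p) \<partial>\<pi>) / (e/2)"
      using measure_ball_le_coupling_cost[OF \<pi>(1), of "e/2" x] e by (simp add: m_def)
    also have "(\<integral>p. dist (fst p) (snd p) \<partial>\<pi>) / (e/2) < m / 2"
      using \<pi>(2) e by (simp add: field_simps)
    finally show ?case using \<open>m > 0\<close> by (simp add: \<mu>n.emeasure_eq_measure)
  qed
qed

lemma totally_ordered_msupport_limit:
  fixes K :: "(real^'n^'n) set"
  assumes "compact K" and \<mu>s: "\<And>n. \<mu>s n \<in> prob_on K" and \<mu>: "\<mu> \<in> prob_on K"
    and tot: "\<And>n. totally_ordered (msupport (\<mu>s n))"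
    and lim: "(\<lambda>n. wasserstein1 (\<mu>s n) \<mu>) \<longlonglongrightarrow> 0"
  shows "totally_ordered (msupport \<mu>)"
  unfolding totally_ordered_def
proof (intro ballI loewner_comparable_approx)
  fix x y e assume "x \<in> msupport \<mu>" "y \<in> msupport \<mu>" "(e::real) > 0"
  then have "eventually (\<lambda>n. 0 < emeasure (\<mu>s n) (ball x e) \<and> 0 < emeasure (\<mu>s n) (ball y e)) sequentially"
    using wasserstein1_tendsto_imp_emeasure_ball_pos[OF assms(1) \<mu>s \<mu> lim] by (simp add: eventually_conj)
  then obtain n where x: "0 < emeasure (\<mu>s n) (ball x e)" and y: "0 < emeasure (\<mu>s n) (ball y e)"
    using eventually_happens'[OF trivial_limit_sequentially] by blast
  obtain a where "a \<in> msupport (\<mu>s n)" "dist x a < e"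
    using msupport_meets_ball[OF prob_onD(2)[OF \<mu>s] x] by blast
  moreover obtain b where "b \<in> msupport (\<mu>s n)" "dist y b < e"
    using msupport_meets_ball[OF prob_onD(2)[OF \<mu>s] y] by blast
  ultimately show "\<exists>a b. dist a x < e \<and> dist b y < e \<and> (loewner_le a b \<or> loewner_le b a)"
    using tot[of n] unfolding totally_ordered_def
    by (intro exI[of _ a] exI[of _ b]) (auto simp: dist_commute)
qed

section \<open>Compactness\<close>

lemma diagonal_subseq_convergent:
  fixes f :: "nat \<Rightarrow> 'c \<Rightarrow> 'a::metric_space"
  assumes C: "countable C" and B: "compact B" and fB: "\<And>n c. c \<in> C \<Longrightarrow> f n c \<in> B"
  obtains s where "strict_mono s" "\<And>c. c \<in> C \<Longrightarrow> convergent (\<lambda>k. f (s k) c)"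
proof (cases "C = {}")
  case True
  then show ?thesis using that[of id] by (simp add: strict_mono_def)
next
  case False
  define r where "r = from_nat_into C"
  have rC: "range r = C" unfolding r_def using C False by simp
  let ?P = "\<lambda>n s. convergent (\<lambda>k. f (s k) (r n))"
  interpret subseqs ?P
  proof (unfold convergent_def subseqs_def, intro allI impI)
    fix n :: nat and s :: "nat \<Rightarrow> nat" assume "strict_mono s"
    have "f (s k) (r n) \<in> B" for k using fB rC by auto
    then obtain l s' where "strict_mono s'" "((\<lambda>k. f (s k) (r n)) \<circ> s') \<longlonglongrightarrow> l"
      using B compact_imp_seq_compact seq_compactE by metis
    then show "\<exists>s'. strict_mono s' \<and> (\<exists>l. (\<lambda>k. f ((s \<circ> s') k) (r n)) \<longlonglongrightarrow> l)"
      by (auto simp: comp_def)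
  qed
  have "?P n diagseq" for n
  proof -
    have reindex: "(\<lambda>k. f ((seqseq (Suc n) \<circ> (\<lambda>k. fold_reduce (Suc n) k (Suc n + k))) k) (r n))
        = (\<lambda>k. f (seqseq (Suc n) k) (r n)) \<circ> (\<lambda>k. fold_reduce (Suc n) k (Suc n + k))"
      by auto
    have "?P n (diagseq \<circ> ((+) (Suc n)))"
      unfolding diagseq_seqseq reindex
      by (intro convergent_subseq_convergent seqseq_holds subseq_diagonal_rest)
    then obtain L where "(\<lambda>k. f (diagseq (k + Suc n)) (r n)) \<longlonglongrightarrow> L"
      by (auto simp: add.commute dest: convergentD)
    then have "(\<lambda>k. f (diagseq k) (r n)) \<longlonglongrightarrow> L" by (rule LIMSEQ_offset)
    then show ?thesis by (auto simp: convergent_def)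
  qed
  then show ?thesis using that[of diagseq] subseq_diagseq rC by auto
qed

text \<open>Sandwiching between convergent sequences whose limits have almost the same trace forces
  convergence, since on Loewner intervals the norm is controlled by the trace.\<close>
lemma loewner_sandwich_convergent:
  fixes f :: "nat \<Rightarrow> real^'n^'n"
  assumes sandwich: "\<And>\<epsilon>. \<epsilon> > 0 \<Longrightarrow> \<exists>a b. (\<forall>k. loewner_le (a k) (f k) \<and> loewner_le (f k) (b k))
      \<and> convergent a \<and> convergent b \<and> trace (lim b) - trace (lim a) < \<epsilon>"
  shows "convergent f"
proof -
  define c where "c = real CARD('n)"
  have "c > 0" by (simp add: c_def)
  have "Cauchy f"
  proof (rule metric_CauchyI)
    fix \<epsilon> :: real assume "\<epsilon> > 0"
    then obtain a b where ab: "\<And>k. loewner_le (a k) (f k)" "\<And>k. loewner_le (f k) (b k)"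
      and conv: "convergent a" "convergent b" and gap: "trace (lim b) - trace (lim a) < \<epsilon> / (3 * c)"
      using sandwich[of "\<epsilon> / (3 * c)"] \<open>c > 0\<close> by auto
    have "((\<lambda>k. trace (b k) - trace (a k)) \<longlongrightarrow> trace (lim b) - trace (lim a)) sequentially"
      using conv by (intro tendsto_diff tendsto_trace) (simp_all add: convergent_LIMSEQ_iff)
    then have "eventually (\<lambda>k. trace (b k) - trace (a k) < \<epsilon> / (3 * c)) sequentially"
      using gap by (rule order_tendstoD(2))
    then obtain N1 where N1: "\<And>k. k \<ge> N1 \<Longrightarrow> trace (b k) - trace (a k) < \<epsilon> / (3 * c)"
      by (auto simp: eventually_sequentially)
    have near: "dist (f k) (a k) < \<epsilon> / 3" if "k \<ge> N1" for k
    proof -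
      have "dist (f k) (a k) \<le> c * (trace (f k) - trace (a k))"
        using loewner_le_dist_le_trace[OF ab(1)] by (simp add: c_def dist_commute)
      also have "\<dots> \<le> c * (trace (b k) - trace (a k))"
        using loewner_le_trace_le[OF ab(2)] \<open>c > 0\<close> by simp
      also have "\<dots> < c * (\<epsilon> / (3 * c))"
        using N1[OF that] \<open>c > 0\<close> by (intro mult_strict_left_mono) auto
      finally show ?thesis using \<open>c > 0\<close> by simp
    qed
    obtain N2 where N2: "\<And>m n. m \<ge> N2 \<Longrightarrow> n \<ge> N2 \<Longrightarrow> dist (a m) (a n) < \<epsilon> / 3"
      using metric_CauchyD[OF convergent_Cauchy[OF conv(1)], of "\<epsilon> / 3"] \<open>\<epsilon> > 0\<close> by auto
    have "dist (f m) (f n) < \<epsilon>" if "m \<ge> max N1 N2" "n \<ge> max N1 N2" for m n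
    proof -
      have "dist (f m) (f n) \<le> dist (f m) (a m) + dist (a m) (a n) + dist (f n) (a n)"
        using dist_triangle[of "f m" "f n" "a m"] dist_triangle[of "a m" "f n" "a n"]
          dist_commute[of "a n" "f n"] by linarith
      then show ?thesis using near[of m] near[of n] N2[of m n] that by simp
    qed
    then show "\<exists>N. \<forall>m\<ge>N. \<forall>n\<ge>N. dist (f m) (f n) < \<epsilon>" by blast
  qed
  then show ?thesis by (simp add: Cauchy_convergent_iff)
qed

lemma isCont_rational_bracket:
  fixes \<Phi> :: "real \<Rightarrow> real"
  assumes "isCont \<Phi> u" "a < u" "u < b" "\<epsilon> > 0"
  obtains r r' where "r \<in> \<rat>" "r' \<in> \<rat>" "a < r" "r < u" "u < r'" "r' < b" "\<Phi> r' - \<Phi> r < \<epsilon>"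
proof -
  obtain \<delta> where "\<delta> > 0" and \<delta>: "\<And>v. dist v u < \<delta> \<Longrightarrow> dist (\<Phi> v) (\<Phi> u) < \<epsilon> / 2"
    using assms(1,4) unfolding continuous_at_eps_delta by (metis half_gt_zero)
  obtain r where r: "r \<in> \<rat>" "max a (u - \<delta>) < r" "r < u"
    using Rats_dense_in_real[of "max a (u - \<delta>)" u] assms \<open>\<delta> > 0\<close> by auto
  obtain r' where r': "r' \<in> \<rat>" "u < r'" "r' < min b (u + \<delta>)"
    using Rats_dense_in_real[of u "min b (u + \<delta>)"] assms \<open>\<delta> > 0\<close> by auto
  have "dist (\<Phi> r) (\<Phi> u) < \<epsilon> / 2" "dist (\<Phi> r') (\<Phi> u) < \<epsilon> / 2"
    using \<delta>[of r] \<delta>[of r'] r r' by (auto simp: dist_real_def)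
  then have "\<Phi> r' - \<Phi> r < \<epsilon>" by (simp add: dist_real_def abs_if split: if_splits)
  then show ?thesis using that r r' by simp
qed

lemma convergent_at_trace_continuity:
  fixes f :: "nat \<Rightarrow> real \<Rightarrow> real^'n^'n"
  assumes mono: "\<And>k u v. u \<in> {0..<1} \<Longrightarrow> v \<in> {0..<1} \<Longrightarrow> u \<le> v \<Longrightarrow> loewner_le (f k u) (f k v)"
    and G: "\<And>r. r \<in> \<rat> \<Longrightarrow> r \<in> {0..<1} \<Longrightarrow> (\<lambda>k. f k r) \<longlonglongrightarrow> G r"
    and \<Phi>: "\<And>r. r \<in> \<rat> \<Longrightarrow> r \<in> {0..<1} \<Longrightarrow> \<Phi> r = trace (G r)"
    and "isCont \<Phi> u" "0 < u" "u < 1"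
  shows "convergent (\<lambda>k. f k u)"
proof (rule loewner_sandwich_convergent)
  fix \<epsilon> :: real assume "\<epsilon> > 0"
  obtain r r' where r: "r \<in> \<rat>" "0 < r" "r < u" and r': "r' \<in> \<rat>" "u < r'" "r' < 1"
    and gap: "\<Phi> r' - \<Phi> r < \<epsilon>"
    using isCont_rational_bracket[OF assms(4-6) \<open>\<epsilon> > 0\<close>] by blast
  have "(\<lambda>k. f k r) \<longlonglongrightarrow> G r" "(\<lambda>k. f k r') \<longlonglongrightarrow> G r'"
    using G r r' by auto
  moreover have "loewner_le (f k r) (f k u)" "loewner_le (f k u) (f k r')" for k
    using mono r r' \<open>u < 1\<close> by auto
  ultimately show "\<exists>a b. (\<forall>k. loewner_le (a k) (f k u) \<and> loewner_le (f k u) (b k))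
      \<and> convergent a \<and> convergent b \<and> trace (lim b) - trace (lim a) < \<epsilon>"
    using gap \<Phi> r r' limI[of "\<lambda>k. f k r"] limI[of "\<lambda>k. f k r'"]
    by (intro exI[of _ "\<lambda>k. f k r"] exI[of _ "\<lambda>k. f k r'"]) (auto simp: convergent_def)
qed

text \<open>Helly's selection theorem for Loewner-monotone paths: a diagonal subsequence converges on
  the rationals; the limit of the traces there is monotone and hence continuous off a countable
  set, where a second diagonal subsequence is extracted. At every other point the paths are
  squeezed between rational points with almost equal limit traces.\<close>
lemma loewner_helly_selection:
  fixes q :: "nat \<Rightarrow> real \<Rightarrow> real^'n^'n"
  assumes mono: "\<And>n u v. u \<in> {0..<1} \<Longrightarrow> v \<in> {0..<1} \<Longrightarrow> u \<le> v \<Longrightarrow> loewner_le (q n u) (q n v)"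
    and psd: "\<And>n u. u \<in> {0..<1} \<Longrightarrow> psd (q n u)"
    and bound: "\<And>n u. u \<in> {0..<1} \<Longrightarrow> trace (q n u) \<le> M"
  obtains s where "strict_mono s" "\<And>u. u \<in> {0..<1} \<Longrightarrow> convergent (\<lambda>k. q (s k) u)"
proof -
  have in_cball: "q n u \<in> cball 0 (CARD('n) * M)" if "u \<in> {0..<1}" for n u
    using psd_norm_le_of_trace_le[OF psd[OF that] bound[OF that]] by simp
  define D where "D = \<rat> \<inter> {0..<1::real}"
  have "countable D" by (simp add: D_def countable_rat)
  have in_cball_D: "q n r \<in> cball 0 (CARD('n) * M)" if "r \<in> D" for n r
    using in_cball that by (simp add: D_def)
  obtain s1 where s1: "strict_mono s1" "\<And>r. r \<in> D \<Longrightarrow> convergent (\<lambda>k. q (s1 k) r)"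
    using diagonal_subseq_convergent[where f = q, OF \<open>countable D\<close> compact_cball in_cball_D] by blast
  define G where "G r = lim (\<lambda>k. q (s1 k) r)" for r
  have G: "(\<lambda>k. q (s1 k) r) \<longlonglongrightarrow> G r" if "r \<in> D" for r
    using s1(2)[OF that] by (simp add: G_def convergent_LIMSEQ_iff)
  have trace_G_mono: "trace (G r) \<le> trace (G r')" if "r \<in> D" "r' \<in> D" "r \<le> r'" for r r'
    by (rule LIMSEQ_le[OF tendsto_trace[OF G[OF that(1)]] tendsto_trace[OF G[OF that(2)]]])
      (use that in \<open>auto simp: D_def intro!: exI[of _ 0] loewner_le_trace_le mono\<close>)
  define \<Phi> where "\<Phi> u = Sup ((\<lambda>r. trace (G r)) ` {r\<in>D. r \<le> u})" for u
  have \<Phi>_G: "\<Phi> r = trace (G r)" if "r \<in> D" for r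
    unfolding \<Phi>_def using that trace_G_mono by (intro cSup_eq_maximum) auto
  have "trace (G r) \<le> M" if "r \<in> D" for r
    by (rule LIMSEQ_le_const2[OF tendsto_trace[OF G[OF that]]]) (use that bound in \<open>auto simp: D_def\<close>)
  then have "mono_on {0<..<1} \<Phi>"
    unfolding mono_on_def \<Phi>_def D_def
    by (intro allI impI cSup_subset_mono bdd_aboveI[of _ M]) (auto intro!: exI[of _ 0])
  define C where "C = insert 0 {u\<in>{0<..<1}. \<not> isCont \<Phi> u}"
  have "countable C"
    unfolding C_def using \<open>mono_on {0<..<1} \<Phi>\<close> by (intro countable_insert mono_on_ctble_discont_open) auto
  have in_cball_C: "q (s1 n) u \<in> cball 0 (CARD('n) * M)" if "u \<in> C" for n u
    using in_cball that by (auto simp: C_def)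
  obtain s2 where s2: "strict_mono s2" "\<And>u. u \<in> C \<Longrightarrow> convergent (\<lambda>k. q (s1 (s2 k)) u)"
    using diagonal_subseq_convergent[where f = "\<lambda>k. q (s1 k)", OF \<open>countable C\<close> compact_cball in_cball_C] by blast
  have "convergent (\<lambda>k. q (s1 (s2 k)) u)" if u: "u \<in> {0..<1}" for u
  proof (cases "u \<in> C")
    case False
    then have "isCont \<Phi> u" "0 < u" "u < 1" using u by (auto simp: C_def)
    moreover have "(\<lambda>k. q (s1 (s2 k)) r) \<longlonglongrightarrow> G r" if "r \<in> \<rat>" "r \<in> {0..<1}" for r
      using LIMSEQ_subseq_LIMSEQ[OF G s2(1)] that by (simp add: D_def comp_def)
    ultimately show ?thesis
      using mono \<Phi>_G by (intro convergent_at_trace_continuity[where G = G and \<Phi> = \<Phi>]) (auto simp: D_def)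
  qed (use s2(2) in blast)
  then show ?thesis using that strict_mono_o[OF s1(1) s2(1)] by (simp add: comp_def)
qed

lemma distr_unif01_trace_le:
  assumes q: "q \<in> borel_measurable borel" and K: "K \<in> sets borel" "emeasure (distr unif01 borel q) K = 1"
    and mono: "\<And>u v. u \<in> {0..<1} \<Longrightarrow> v \<in> {0..<1} \<Longrightarrow> u \<le> v \<Longrightarrow> loewner_le (q u) (q v)"
    and bound: "\<And>x. x \<in> K \<Longrightarrow> trace x \<le> M" and u: "u \<in> {0..<1}"
  shows "trace (q u) \<le> M"
proof -
  have "\<exists>v\<in>{u..<1}. q v \<in> K"
  proof (rule ccontr)
    assume "\<not> ?thesis"
    then have "q -` K \<inter> {0..<1} \<subseteq> {0..<u}" by auto
    then have "emeasure lborel (q -` K \<inter> {0..<1}) \<le> u"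
      using emeasure_mono[of _ "{0..<u}" lborel] u by fastforce
    moreover have "emeasure lborel (q -` K \<inter> {0..<1}) = 1"
      using K q measurable_sets_borel[OF q K(1)] by (simp add: emeasure_distr emeasure_unif01)
    ultimately show False using u by (simp add: ennreal_le_1)
  qed
  then obtain v where "v \<in> {u..<1}" "q v \<in> K" by blast
  then show ?thesis using mono[of u v] u bound[of "q v"] loewner_le_trace_le by fastforce
qed

lemma wasserstein1_distr_unif01_tendsto:
  fixes f :: "nat \<Rightarrow> real \<Rightarrow> 'a::{metric_space, second_countable_topology}"
  assumes f: "\<And>k. f k \<in> borel_measurable borel" and g: "g \<in> borel_measurable borel"
    and lim: "\<And>u. u \<in> {0<..<1} \<Longrightarrow> (\<lambda>k. f k u) \<longlonglongrightarrow> g u"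
    and bound: "\<And>k u. u \<in> {0<..<1} \<Longrightarrow> dist (f k u) (g u) \<le> B"
  shows "(\<lambda>k. wasserstein1 (distr unif01 borel (f k)) (distr unif01 borel g)) \<longlonglongrightarrow> 0"
proof -
  interpret prob_space unif01 by (rule prob_space_unif01)
  have lower: "0 \<le> wasserstein1 (distr unif01 borel (f k)) (distr unif01 borel g)" for k
  proof -
    have "distr unif01 borel (f k) \<Otimes>\<^sub>M distr unif01 borel g
        \<in> couplings (distr unif01 borel (f k)) (distr unif01 borel g)"
      using f g by (intro product_coupling prob_space_distr) auto
    then show ?thesis by (intro wasserstein1_nonneg) blast
  qed
  have upper: "wasserstein1 (distr unif01 borel (f k)) (distr unif01 borel g)
      \<le> (\<integral>u. dist (f k u) (g u) \<partial>unif01)" for k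
    by (rule wasserstein1_distr_le[OF prob_space_unif01]) (use f g in simp_all)
  have "(\<lambda>k. \<integral>u. dist (f k u) (g u) \<partial>unif01) \<longlonglongrightarrow> (\<integral>u. 0 \<partial>unif01)"
  proof (rule integral_dominated_convergence[where w="\<lambda>_. B"])
    show "AE u in unif01. (\<lambda>k. dist (f k u) (g u)) \<longlonglongrightarrow> 0"
      using AE_unif01_in_Ioo by eventually_elim (rule tendsto_dist_iff[THEN iffD1, OF lim])
    show "AE u in unif01. norm (dist (f k u) (g u)) \<le> B" for k
      using AE_unif01_in_Ioo by eventually_elim (simp add: bound)
    show "(\<lambda>u. dist (f k u) (g u)) \<in> borel_measurable unif01" for k
      using f g by simp
  qed simp_all
  then have lim0: "(\<lambda>k. \<integral>u. dist (f k u) (g u) \<partial>unif01) \<longlonglongrightarrow> 0" by simp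
  show ?thesis
    by (rule tendsto_sandwich[OF _ _ tendsto_const lim0]) (use lower upper in auto)
qed

lemma distr_unif01_limit_mono_prob_on:
  fixes q :: "nat \<Rightarrow> real \<Rightarrow> real^'n^'n" and K :: "(real^'n^'n) set"
  assumes "closed K" and q: "\<And>n. q n \<in> borel_measurable borel" "\<And>n. distr unif01 borel (q n) \<in> prob_on K"
    and psd: "\<And>n u. u \<in> {0..<1} \<Longrightarrow> q n u \<in> psd_set"
    and mono: "\<And>n u v. u \<in> {0..<1} \<Longrightarrow> v \<in> {0..<1} \<Longrightarrow> u \<le> v \<Longrightarrow> loewner_le (q n u) (q n v)"
    and ql: "ql \<in> borel_measurable borel" and lim: "\<And>u. u \<in> {0..<1} \<Longrightarrow> (\<lambda>n. q n u) \<longlonglongrightarrow> ql u"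
  shows "distr unif01 borel ql \<in> mono_prob_on K"
proof -
  interpret prob_space unif01 by (rule prob_space_unif01)
  have "ql u \<in> psd_set" if "u \<in> {0..<1}" for u
    using that psd by (intro Lim_in_closed_set[OF closed_psd_set _ _ lim]) auto
  moreover have "loewner_le (ql u) (ql v)" if "u \<in> {0..<1}" "v \<in> {0..<1}" "u \<le> v" for u v
    using Lim_in_closed_set[OF closed_loewner_le _ _ tendsto_Pair[OF lim lim]] that mono by auto
  ultimately have mono_ql: "distr unif01 borel ql \<in> monotone_measures"
    by (rule monotone_measuresI[OF ql])
  have "AE u in unif01. ql u \<in> K"
  proof -
    have "AE u in unif01. q n u \<in> K" for n
      using prob_on_AE_in[OF q(2) \<open>closed K\<close>] q(1) \<open>closed K\<close> by (simp add: AE_distr_iff)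
    then have "AE u in unif01. u \<in> {0<..<1} \<and> (\<forall>n. q n u \<in> K)"
      using AE_unif01_in_Ioo by (simp add: AE_all_countable)
    then show ?thesis
      by eventually_elim (auto intro: Lim_in_closed_set[OF \<open>closed K\<close> _ _ lim])
  qed
  moreover have "ql -` K \<in> sets borel"
    using measurable_sets_borel[OF ql] \<open>closed K\<close> by simp
  ultimately have "prob (ql -` K) = 1"
    using AE_in_set_eq_1[of "ql -` K"] by simp
  then have "distr unif01 borel ql \<in> prob_on K"
    using ql \<open>closed K\<close> by (simp add: prob_on_def prob_space_distr emeasure_distr emeasure_eq_measure)
  with mono_ql show ?thesis by (simp add: mono_prob_on_def)
qed

lemma mono_prob_on_wasserstein1_convergent_subseq:
  fixes K :: "(real^'n^'n) set" and \<mu>s :: "nat \<Rightarrow> (real^'n^'n) measure"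
  assumes K: "compact K" "K \<subseteq> psd_set" and \<mu>s: "\<And>n. \<mu>s n \<in> mono_prob_on K"
  obtains r \<mu> where "strict_mono r" "\<mu> \<in> mono_prob_on K" "(\<lambda>n. wasserstein1 (\<mu>s (r n)) \<mu>) \<longlonglongrightarrow> 0"
proof -
  have "\<forall>n. \<exists>q. q \<in> borel_measurable borel \<and> (\<forall>u\<in>{0..<1}. q u \<in> psd_set)
      \<and> (\<forall>u\<in>{0..<1}. \<forall>v\<in>{0..<1}. u \<le> v \<longrightarrow> loewner_le (q u) (q v)) \<and> \<mu>s n = distr unif01 borel q"
    using \<mu>s unfolding mono_prob_on_def monotone_measures_def by (auto simp: measurable_lborel1)
  then obtain q where q_meas: "\<And>n. q n \<in> borel_measurable borel"
    and q_psd: "\<And>n u. u \<in> {0..<1} \<Longrightarrow> q n u \<in> psd_set"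
    and q_mono: "\<And>n u v. u \<in> {0..<1} \<Longrightarrow> v \<in> {0..<1} \<Longrightarrow> u \<le> v \<Longrightarrow> loewner_le (q n u) (q n v)"
    and \<mu>s_eq: "\<And>n. \<mu>s n = distr unif01 borel (q n)"
    by metis
  obtain M where "\<And>y. y \<in> trace ` K \<Longrightarrow> \<bar>y\<bar> \<le> M"
    using compact_imp_bounded[OF compact_continuous_image[OF continuous_on_trace K(1)]]
    by (auto simp: bounded_real)
  then have M: "trace x \<le> M" if "x \<in> K" for x
    using that by fastforce
  have K_borel: "K \<in> sets borel" using K(1) by (simp add: compact_imp_closed)
  have q_K: "distr unif01 borel (q n) \<in> prob_on K" for n using \<mu>s[of n] by (simp add: \<mu>s_eq mono_prob_on_def)
  have q_trace: "trace (q n u) \<le> M" if "u \<in> {0..<1}" for n u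
    using distr_unif01_trace_le[OF q_meas K_borel prob_onD(3)[OF q_K] q_mono M that] .
  have q_norm: "norm (q n u) \<le> CARD('n) * M" if "u \<in> {0..<1}" for n u
    using q_psd[OF that] by (intro psd_norm_le_of_trace_le[OF _ q_trace[OF that]]) (simp add: psd_set_def)
  obtain s where s: "strict_mono s" "\<And>u. u \<in> {0..<1} \<Longrightarrow> convergent (\<lambda>k. q (s k) u)"
    using loewner_helly_selection[where q = q, OF q_mono _ q_trace] q_psd by (auto simp: psd_set_def)
  define ql where "ql u = (if u \<in> {0..<1} then lim (\<lambda>k. q (s k) u) else 0)" for u
  have lim: "(\<lambda>k. q (s k) u) \<longlonglongrightarrow> ql u" if "u \<in> {0..<1}" for u
    using s(2)[OF that] that by (simp add: ql_def convergent_LIMSEQ_iff)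
  have ql_meas: "ql \<in> borel_measurable borel"
  proof (rule borel_measurable_LIMSEQ_metric)
    show "(\<lambda>u. if u \<in> {0..<1} then q (s k) u else 0) \<in> borel_measurable borel" for k
      by (intro measurable_If_set q_meas) auto
    show "(\<lambda>k. if u \<in> {0..<1} then q (s k) u else 0) \<longlonglongrightarrow> ql u" for u
      using lim[of u] by (cases "u \<in> {0..<1}") (simp_all only: ql_def if_True if_False tendsto_const)
  qed
  have ql_norm: "norm (ql u) \<le> CARD('n) * M" if "u \<in> {0..<1}" for u
    using Lim_in_closed_set[OF closed_cball _ _ lim[OF that], of 0] q_norm[OF that] by simp
  have "distr unif01 borel ql \<in> mono_prob_on K"
    using compact_imp_closed[OF K(1)] q_meas q_K q_psd q_mono ql_meas lim
    by (rule distr_unif01_limit_mono_prob_on[where q = "\<lambda>k. q (s k)"])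
  moreover have "(\<lambda>k. wasserstein1 (\<mu>s (s k)) (distr unif01 borel ql)) \<longlonglongrightarrow> 0"
    unfolding \<mu>s_eq
  proof (rule wasserstein1_distr_unif01_tendsto[where B = "2 * (CARD('n) * M)"])
    fix k and u :: real assume "u \<in> {0<..<1}"
    then have "u \<in> {0..<1}" by simp
    then show "dist (q (s k) u) (ql u) \<le> 2 * (CARD('n) * M)"
      using q_norm[of u "s k"] ql_norm[of u] norm_triangle_ineq4[of "q (s k) u" "ql u"]
      by (simp add: dist_norm)
  qed (use q_meas ql_meas lim in auto)
  ultimately show ?thesis using that s(1) by blast
qed


theorem proposition5p9:
  fixes K :: "(real^'n^'n) set"
  assumes "compact K" and "K \<subseteq> psd_set"
  shows "(\<forall>(\<mu>s :: nat \<Rightarrow> (real^'n^'n) measure) \<mu>.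
            (\<forall>n. \<mu>s n \<in> mono_prob_on K) \<and> \<mu> \<in> prob_on K \<and>
            (\<lambda>n. wasserstein1 (\<mu>s n) \<mu>) \<longlonglongrightarrow> 0
            \<longrightarrow> \<mu> \<in> mono_prob_on K)
       \<and> (\<forall>\<mu>s :: nat \<Rightarrow> (real^'n^'n) measure. (\<forall>n. \<mu>s n \<in> mono_prob_on K) \<longrightarrow>
            (\<exists>r \<mu>. strict_mono r \<and> \<mu> \<in> mono_prob_on K \<and>
               (\<lambda>n. wasserstein1 (\<mu>s (r n)) \<mu>) \<longlonglongrightarrow> 0))
       \<and> (\<forall>\<mu>\<in>prob_on K. totally_ordered (msupport \<mu>) \<longleftrightarrow> \<mu> \<in> mono_prob_on K)"
proof (intro conjI allI impI ballI)
  fix \<mu>s :: "nat \<Rightarrow> (real^'n^'n) measure" and \<mu>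
  assume "(\<forall>n. \<mu>s n \<in> mono_prob_on K) \<and> \<mu> \<in> prob_on K \<and> (\<lambda>n. wasserstein1 (\<mu>s n) \<mu>) \<longlonglongrightarrow> 0"
  then have \<mu>s: "\<And>n. \<mu>s n \<in> mono_prob_on K" and \<mu>: "\<mu> \<in> prob_on K"
    and lim: "(\<lambda>n. wasserstein1 (\<mu>s n) \<mu>) \<longlonglongrightarrow> 0" by auto
  have "\<mu>s n \<in> prob_on K" "totally_ordered (msupport (\<mu>s n))" for n
    using \<mu>s[of n] mono_prob_on_iff_totally_ordered_msupport[OF assms] by (auto simp: mono_prob_on_def)
  then have "totally_ordered (msupport \<mu>)"
    using totally_ordered_msupport_limit[OF assms(1) _ \<mu> _ lim] by blast
  then show "\<mu> \<in> mono_prob_on K"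
    using mono_prob_on_iff_totally_ordered_msupport[OF assms \<mu>] by blast
next
  fix \<mu>s :: "nat \<Rightarrow> (real^'n^'n) measure"
  assume "\<forall>n. \<mu>s n \<in> mono_prob_on K"
  then show "\<exists>r \<mu>. strict_mono r \<and> \<mu> \<in> mono_prob_on K \<and> (\<lambda>n. wasserstein1 (\<mu>s (r n)) \<mu>) \<longlonglongrightarrow> 0"
    using mono_prob_on_wasserstein1_convergent_subseq[OF assms] by metis
next
  fix \<mu> assume "\<mu> \<in> prob_on K"
  then show "totally_ordered (msupport \<mu>) \<longleftrightarrow> \<mu> \<in> mono_prob_on K"
    using mono_prob_on_iff_totally_ordered_msupport[OF assms] by blast
qed

end
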